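(* In the M/M/1 setting below, let $p^S_s:=R-C\,\mathbb{E}[W(q^S_s\Lambda)]$ be the fee that induces the joining probability $q^S_s$ in the shared belief case. If $p^S_s\ge0$, then $q^S_s\le q^S_e$; moreover, if $p^S_s=0$ then $q^S_s=q^S_e$.
   Context: Setting: an M/M/1 queue with true (deterministic) Poisson arrival rate $\lambda>0$ and exponential service times with rate $\mu$, so the expected time in system at effective arrival rate $x\in[0,\mu)$ is $W(x)=1/(\mu-x)$. Each served customer receives reward $R$ and incurs waiting cost $C>0$ per unit time, with $R\ge C/\mu$. Customers' beliefs about the arrival rate are described by a non-degenerate nonnegative random variable $\Lambda$ whose support has minimum $\lambda_{\min}$ and maximum $\lambda_{\max}$, with $0\le\lambda_{\min}<\lambda<\lambda_{\max}<\mu$. The social welfare rate as a function of the joining probability $q\in[0,1]$ is $\mathrm{SW}^S(q)=q\lambda\,(R-C\,W(q\lambda))$ (strictly concave on $[0,1]$), and $q^S_s$ is its maximizer over $[0,1]$. The individual (no-fee) equilibrium $q^S_e$ is defined as follows: if $R-C\,\mathbb{E}[W(\Lambda)]\ge0$ then $q^S_e=1$; otherwise $q^S_e$ is the unique $q\in[0,1]$ with $C\,\mathbb{E}[W(q\Lambda)]=R$. *)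

theory Defs
  imports "HOL-Probability.Probability"
begin

text \<open>Expected time in an M/M/1 system with service rate mu at effective arrival rate x.\<close>
definition W :: "real \<Rightarrow> real \<Rightarrow> real" where
  "W mu x = 1 / (mu - x)"

definition SW :: "real \<Rightarrow> real \<Rightarrow> real \<Rightarrow> real \<Rightarrow> real \<Rightarrow> real" where
  "SW lam mu R C q = q * lam * (R - C * W mu (q * lam))"

text \<open>Expected sojourn time under the belief distribution D (law of Lambda) at joining probability q.\<close>
definition EW :: "real measure \<Rightarrow> real \<Rightarrow> real \<Rightarrow> real" where
  "EW D mu q = (\<integral>x. W mu (q * x) \<partial>D)"

definition q_s :: "real \<Rightarrow> real \<Rightarrow> real \<Rightarrow> real \<Rightarrow> real" where
  "q_s lam mu R C = (THE q. q \<in> {0..1} \<and> (\<forall>q'\<in>{0..1}. SW lam mu R C q' \<le> SW lam mu R C q))"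

definition q_e :: "real measure \<Rightarrow> real \<Rightarrow> real \<Rightarrow> real \<Rightarrow> real" where
  "q_e D mu R C = (if R - C * EW D mu 1 \<ge> 0 then 1
                   else (THE q. q \<in> {0..1} \<and> C * EW D mu q = R))"

end

theory Submission
  imports Defs
begin

(*
  Since W is increasing, the expected cost q |-> C * E[W(q Lambda)] is continuous and strictly
  increasing on [0,1]; strictness only needs Lambda to be nonzero with positive probability,
  and of the support hypotheses only Lambda <= lmax < mu is used. At q = 0 the cost is C/mu <= R, so the equilibrium
  q_e is the largest joining probability whose inducing fee R - C * E[W(q Lambda)] is
  nonnegative, and the only one with fee zero if there is one. It remains to see that the
  social optimum q_s lies in [0,1], i.e. that the strictly concave welfare has a unique
  maximizer there.
*)

lemma W_strict_mono:
  fixes mu x y :: real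
  assumes "x < y" "y < mu"
  shows "W mu x < W mu y"
  using assms by (simp add: W_def divide_strict_left_mono)

lemma W_lipschitz:
  fixes mu m x y :: real
  assumes "x \<le> m" "y \<le> m" "m < mu"
  shows "\<bar>W mu x - W mu y\<bar> \<le> \<bar>x - y\<bar> / (mu - m)\<^sup>2"
proof -
  have "(mu - m)\<^sup>2 \<le> (mu - x) * (mu - y)"
    unfolding power2_eq_square using assms by (intro mult_mono) auto
  moreover have "W mu x - W mu y = (x - y) / ((mu - x) * (mu - y))"
    using assms by (simp add: W_def field_simps)
  ultimately show ?thesis
    using assms by (simp add: abs_div frac_le)
qed

lemma inverse_mean_less_mean_inverse:
  fixes u v :: real
  assumes "0 < u" "0 < v" "u \<noteq> v"
  shows "2 / (u + v) < (1 / u + 1 / v) / 2"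
proof -
  have "0 < (u - v)\<^sup>2" using assms by simp
  then show ?thesis using assms by (simp add: field_simps power2_eq_square)
qed

lemma max_unique_if_midpoint_strictly_concave:
  fixes f :: "real \<Rightarrow> real"
  assumes "convex S"
    and midpoint: "\<And>a b. a \<in> S \<Longrightarrow> b \<in> S \<Longrightarrow> a \<noteq> b \<Longrightarrow> (f a + f b) / 2 < f ((a + b) / 2)"
    and "a \<in> S" "\<forall>x\<in>S. f x \<le> f a"
    and "b \<in> S" "\<forall>x\<in>S. f x \<le> f b"
  shows "a = b"
proof (rule ccontr)
  assume "a \<noteq> b"
  have "(1/2) *\<^sub>R a + (1/2) *\<^sub>R b \<in> S"
    using assms by (intro convexD) auto
  then have "f ((a + b) / 2) \<le> f a"
    using assms by (simp add: add_divide_distrib)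
  moreover have "f a = f b"
    using assms by (simp add: order_antisym)
  ultimately show False
    using midpoint[OF \<open>a \<in> S\<close> \<open>b \<in> S\<close> \<open>a \<noteq> b\<close>] by simp
qed

lemma SW_partial_fractions:
  fixes lam mu R C q :: real
  assumes "q * lam \<noteq> mu"
  shows "SW lam mu R C q = q * lam * R - C * mu / (mu - q * lam) + C"
  using assms by (simp add: SW_def W_def field_simps)

lemma SW_midpoint_strictly_concave:
  fixes lam mu R C a b :: real
  assumes "0 < lam" "lam < mu" "0 < C" "a \<in> {0..1}" "b \<in> {0..1}" "a \<noteq> b"
  shows "(SW lam mu R C a + SW lam mu R C b) / 2 < SW lam mu R C ((a + b) / 2)"
proof -
  define u v where "u = mu - a * lam" and "v = mu - b * lam"
  have "a * lam \<le> lam" "b * lam \<le> lam"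
    using assms by (simp_all add: mult_left_le_one_le)
  then have "0 < u" "0 < v"
    unfolding u_def v_def using assms(2) by linarith+
  moreover have "u \<noteq> v"
    using assms by (simp add: u_def v_def)
  ultimately have "C * mu * (2 / (u + v)) < C * mu * ((1 / u + 1 / v) / 2)"
    using assms inverse_mean_less_mean_inverse by (intro mult_strict_left_mono) auto
  moreover have "SW lam mu R C a = a * lam * R - C * mu * (1 / u) + C"
    using SW_partial_fractions[of a lam mu R C] \<open>0 < u\<close> by (simp add: u_def)
  moreover have "SW lam mu R C b = b * lam * R - C * mu * (1 / v) + C"
    using SW_partial_fractions[of b lam mu R C] \<open>0 < v\<close> by (simp add: v_def)
  moreover have midpoint: "mu - (a + b) / 2 * lam = (u + v) / 2"
    by (simp add: u_def v_def field_simps)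
  then have "SW lam mu R C ((a + b) / 2) = (a + b) / 2 * lam * R - C * mu * (2 / (u + v)) + C"
    using SW_partial_fractions[of "(a + b) / 2" lam mu R C, unfolded midpoint] \<open>0 < u\<close> \<open>0 < v\<close>
    by simp
  ultimately show ?thesis
    by (simp add: algebra_simps add_divide_distrib)
qed

lemma q_s_mem:
  fixes lam mu R C :: real
  assumes "0 < lam" "lam < mu" "0 < C"
  shows "q_s lam mu R C \<in> {0..1}"
proof -
  \<comment> \<open>q_s is defined by THE, so this needs the uniqueness of the maximizer.\<close>
  have "\<forall>q\<in>{0..1}. mu - q * lam \<noteq> 0"
    using assms by (auto simp: mult_left_le_one_le dest: order.strict_trans1[rotated])
  then have continuous: "continuous_on {0..1} (SW lam mu R C)"
    unfolding SW_def W_def by (intro continuous_intros) auto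
  obtain q where "q \<in> {0..1}" "\<forall>q'\<in>{0..1}. SW lam mu R C q' \<le> SW lam mu R C q"
    using continuous_attains_sup[OF compact_Icc _ continuous] by auto
  moreover note max_unique_if_midpoint_strictly_concave[of "{0..1}" "SW lam mu R C",
      OF convex_real_interval(5) SW_midpoint_strictly_concave[OF assms]]
  ultimately have "\<exists>!q. q \<in> {0..1} \<and> (\<forall>q'\<in>{0..1}. SW lam mu R C q' \<le> SW lam mu R C q)"
    by blast
  from theI'[OF this] show ?thesis
    unfolding q_s_def by blast
qed

locale bounded_belief = prob_space D for D :: "real measure" +
  fixes mu lmax :: real
  assumes sets_D: "sets D = sets borel"
    and AE_bounded: "AE x in D. 0 \<le> x \<and> x \<le> lmax"
    and lmax_less_mu: "lmax < mu"
begin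

lemma scaled_le_lmax:
  assumes "0 \<le> x" "x \<le> lmax" "q \<in> {0..1}"
  shows "q * x \<le> lmax"
  using assms mult_left_le_one_le[of x q] by auto

lemma integrable_W:
  assumes "q \<in> {0..1}"
  shows "integrable D (\<lambda>x. W mu (q * x))"
proof (rule integrable_const_bound[where B = "W mu lmax"])
  show "AE x in D. norm (W mu (q * x)) \<le> W mu lmax"
    using AE_bounded
  proof eventually_elim
    case (elim x)
    then have "q * x \<le> lmax"
      using scaled_le_lmax assms by blast
    with lmax_less_mu show ?case
      by (simp add: W_def frac_le)
  qed
  show "(\<lambda>x. W mu (q * x)) \<in> borel_measurable D"
    unfolding W_def by (subst measurable_cong_sets[OF sets_D refl]) measurable
qed

lemma EW_diff:
  assumes "q \<in> {0..1}" "r \<in> {0..1}"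
  shows "EW D mu q - EW D mu r = (\<integral>x. W mu (q * x) - W mu (r * x) \<partial>D)"
  unfolding EW_def using assms by (simp add: integrable_W)

lemma EW_lipschitz:
  assumes "q \<in> {0..1}" "r \<in> {0..1}"
  shows "\<bar>EW D mu q - EW D mu r\<bar> \<le> lmax / (mu - lmax)\<^sup>2 * \<bar>q - r\<bar>"
proof -
  let ?K = "lmax / (mu - lmax)\<^sup>2 * \<bar>q - r\<bar>"
  have "AE x in D. \<bar>W mu (q * x) - W mu (r * x)\<bar> \<le> ?K"
    using AE_bounded
  proof eventually_elim
    case (elim x)
    have "\<bar>W mu (q * x) - W mu (r * x)\<bar> \<le> \<bar>q * x - r * x\<bar> / (mu - lmax)\<^sup>2"
      using scaled_le_lmax assms elim lmax_less_mu by (intro W_lipschitz) auto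
    also have "\<bar>q * x - r * x\<bar> \<le> lmax * \<bar>q - r\<bar>"
      using elim
      by (simp add: left_diff_distrib[symmetric] abs_mult mult.commute[of lmax] mult_left_mono)
    finally show ?case
      by (simp add: divide_right_mono)
  qed
  then have "AE x in D. - ?K \<le> W mu (q * x) - W mu (r * x)"
    and "AE x in D. W mu (q * x) - W mu (r * x) \<le> ?K"
    by (eventually_elim, simp add: abs_le_iff)+
  moreover have "integrable D (\<lambda>x. W mu (q * x) - W mu (r * x))"
    using assms by (simp add: integrable_W)
  ultimately have "- ?K \<le> (\<integral>x. W mu (q * x) - W mu (r * x) \<partial>D)"
    and "(\<integral>x. W mu (q * x) - W mu (r * x) \<partial>D) \<le> ?K"
    by (auto intro: integral_ge_const integral_le_const)
  then show ?thesis
    unfolding EW_diff[OF assms] abs_le_iff by linarith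
qed

lemma continuous_on_EW: "continuous_on {0..1} (EW D mu)"
proof (rule lipschitz_on_continuous_on[OF lipschitz_onI])
  show "dist (EW D mu q) (EW D mu r) \<le> lmax / (mu - lmax)\<^sup>2 * dist q r"
    if "q \<in> {0..1}" "r \<in> {0..1}" for q r
    using EW_lipschitz[OF that] by (simp add: dist_real_def)
  have "AE x in D. 0 \<le> lmax"
    using AE_bounded by eventually_elim auto
  then show "0 \<le> lmax / (mu - lmax)\<^sup>2"
    by simp
qed

lemma strict_mono_on_EW:
  assumes nonzero: "\<not> (AE x in D. x = 0)"
  shows "strict_mono_on {0..1} (EW D mu)"
proof (rule strict_mono_onI)
  fix a b :: real
  assume ab: "a \<in> {0..1}" "b \<in> {0..1}" "a < b"
  let ?d = "\<lambda>x. W mu (b * x) - W mu (a * x)"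
  have pointwise: "AE x in D. 0 \<le> ?d x \<and> (?d x = 0 \<longrightarrow> x = 0)"
    using AE_bounded
  proof eventually_elim
    case (elim x)
    then have "b * x < mu"
      using ab scaled_le_lmax lmax_less_mu by (meson order.strict_trans1)
    moreover have "a * x < b * x" if "x \<noteq> 0"
      using that elim ab by simp
    ultimately show ?case
      using W_strict_mono[of "a * x" "b * x" mu] by (cases "x = 0") auto
  qed
  have "(\<integral>x. ?d x \<partial>D) \<noteq> 0"
  proof
    assume "(\<integral>x. ?d x \<partial>D) = 0"
    then have "AE x in D. ?d x = 0"
      using ab pointwise by (subst integral_nonneg_eq_0_iff_AE[symmetric]) (auto simp: integrable_W)
    with pointwise have "AE x in D. x = 0"
      by eventually_elim blast
    with nonzero show False ..
  qed
  moreover have "0 \<le> (\<integral>x. ?d x \<partial>D)"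
    using pointwise by (auto intro: integral_nonneg_AE)
  ultimately show "EW D mu a < EW D mu b"
    using EW_diff[of b a] ab by simp
qed

lemma EW_0: "EW D mu 0 = 1 / mu"
  by (simp add: EW_def W_def prob_space)

context
  fixes C R :: real
  assumes nonzero: "\<not> (AE x in D. x = 0)"
    and C_pos: "0 < C"
    and R_ge: "C / mu \<le> R"
begin

lemma strict_mono_on_expected_cost: "strict_mono_on {0..1} (\<lambda>q. C * EW D mu q)"
  using strict_mono_on_EW[OF nonzero] C_pos by (simp add: strict_mono_on_def)

lemma q_e_root:
  assumes "R < C * EW D mu 1"
  shows "q_e D mu R C \<in> {0..1}" "C * EW D mu (q_e D mu R C) = R"
proof -
  have "C * EW D mu 0 \<le> R"
    using R_ge by (simp add: EW_0)
  moreover have "continuous_on {0..1} (\<lambda>q. C * EW D mu q)"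
    using continuous_on_EW by (intro continuous_intros)
  ultimately obtain r where "r \<in> {0..1}" "C * EW D mu r = R"
    using IVT'[of "\<lambda>q. C * EW D mu q" 0 R 1] assms by auto
  moreover have "q = r" if "q \<in> {0..1}" "C * EW D mu q = R" for q
    using strict_mono_on_eqD[OF strict_mono_on_expected_cost] that calculation by metis
  ultimately have "\<exists>!q. q \<in> {0..1} \<and> C * EW D mu q = R"
    by blast
  from theI'[OF this] assms show "q_e D mu R C \<in> {0..1}" "C * EW D mu (q_e D mu R C) = R"
    by (simp_all add: q_e_def)
qed

lemma le_q_e_if_fee_nonneg:
  assumes "s \<in> {0..1}" "C * EW D mu s \<le> R"
  shows "s \<le> q_e D mu R C"
proof (cases "C * EW D mu 1 \<le> R")
  case True
  then show ?thesis
    using assms by (simp add: q_e_def)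
next
  case False
  then have "q_e D mu R C \<in> {0..1}" "C * EW D mu (q_e D mu R C) = R"
    using q_e_root by simp_all
  with assms show ?thesis
    using strict_mono_on_less_eq[OF strict_mono_on_expected_cost, of s "q_e D mu R C"] by simp
qed

lemma eq_q_e_if_fee_zero:
  assumes "s \<in> {0..1}" "C * EW D mu s = R"
  shows "s = q_e D mu R C"
proof (cases "C * EW D mu 1 \<le> R")
  case True
  then have "1 \<le> s"
    using assms strict_mono_on_less_eq[OF strict_mono_on_expected_cost] by force
  with True assms show ?thesis
    by (simp add: q_e_def)
next
  case False
  then have "q_e D mu R C \<in> {0..1}" "C * EW D mu (q_e D mu R C) = R"
    using q_e_root by simp_all
  with assms show ?thesis
    using strict_mono_on_eqD[OF strict_mono_on_expected_cost] by metis
qed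

end

end

theorem proposition2:
  fixes D :: "real measure" and lam mu R C lmin lmax :: real
  assumes D_prob: "prob_space D"
    and D_sets: "sets D = sets borel"
    and lam_pos: "lam > 0"
    and C_pos: "C > 0"
    and R_ge: "R \<ge> C / mu"
    and bounds: "0 \<le> lmin" "lmin < lam" "lam < lmax" "lmax < mu"
    and supp_lower: "AE x in D. lmin \<le> x"
    and supp_upper: "AE x in D. x \<le> lmax"
    and lmin_in_supp: "\<forall>e>0. measure D {lmin - e <..< lmin + e} > 0"
    and lmax_in_supp: "\<forall>e>0. measure D {lmax - e <..< lmax + e} > 0"
    and nondegenerate: "\<not> (\<exists>c. AE x in D. x = c)"
  shows "(R - C * EW D mu (q_s lam mu R C) \<ge> 0 \<longrightarrow> q_s lam mu R C \<le> q_e D mu R C)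
       \<and> (R - C * EW D mu (q_s lam mu R C) = 0 \<longrightarrow> q_s lam mu R C = q_e D mu R C)"
proof -
  have "AE x in D. 0 \<le> x \<and> x \<le> lmax"
    using supp_lower supp_upper by eventually_elim (use bounds in auto)
  then interpret bounded_belief D mu lmax
    using D_prob D_sets bounds by (intro bounded_belief.intro bounded_belief_axioms.intro)
  have nonzero: "\<not> (AE x in D. x = 0)"
    using nondegenerate by blast
  have "q_s lam mu R C \<in> {0..1}"
    using q_s_mem lam_pos C_pos bounds by simp
  then show ?thesis
    using le_q_e_if_fee_nonneg[OF nonzero C_pos R_ge] eq_q_e_if_fee_zero[OF nonzero C_pos R_ge]
    by simp
qed

end
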